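(* An orientation-preserving non-Carleman shift $\alpha:\mathbb{R}_+\to\mathbb{R}_+$ belongs to $SOS(\mathbb{R}_+)$ if and only if $\alpha(t)=te^{\omega(t)}$ for $t\in\mathbb{R}_+$, for some real-valued function $\omega\in SO(\mathbb{R}_+)\cap C^1(\mathbb{R}_+)$ such that the function $t\mapsto t\omega'(t)$ also belongs to $SO(\mathbb{R}_+)$ and $\inf_{t\in\mathbb{R}_+}(1+t\omega'(t))>0$.
   Context: $\mathbb{R}_+=(0,\infty)$. $C_b(\mathbb{R}_+)$: bounded continuous complex functions on $\mathbb{R}_+$. $SO(\mathbb{R}_+)$ is the set of $f\in C_b(\mathbb{R}_+)$ with $\lim_{r\to s}\sup\{|f(t)-f(\tau)|:t,\tau\in[\lambda r,r]\}=0$ for $s\in\{0,\infty\}$ and each (equivalently some) $\lambda\in(0,1)$. An orientation-preserving non-Carleman shift is an orientation-preserving diffeomorphism $\alpha$ of $\mathbb{R}_+$ onto itself with no fixed points in $\mathbb{R}_+$ (only fixed points $0$ and $\infty$). $SOS(\mathbb{R}_+)$ is the set of such shifts with $\log\alpha'\in C_b(\mathbb{R}_+)$ and $\alpha'\in SO(\mathbb{R}_+)$. *)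

theory Defs
  imports "HOL-Analysis.Analysis"
begin

definition osc :: "(real \<Rightarrow> complex) \<Rightarrow> real \<Rightarrow> real \<Rightarrow> real" where
  "osc f lam r = Sup {cmod (f t - f \<tau>) | t \<tau>. t \<in> {lam * r..r} \<and> \<tau> \<in> {lam * r..r}}"

definition Cb :: "(real \<Rightarrow> complex) set" where
  "Cb = {f. continuous_on {0<..} f \<and> bounded (f ` {0<..})}"

definition SO :: "(real \<Rightarrow> complex) set" where
  "SO = {f. f \<in> Cb \<and>
     (\<forall>lam. 0 < lam \<and> lam < 1 \<longrightarrow>
        ((\<lambda>r. osc f lam r) \<longlongrightarrow> 0) (at_right 0) \<and>
        ((\<lambda>r. osc f lam r) \<longlongrightarrow> 0) at_top)}"

definition C1_pos :: "(real \<Rightarrow> real) \<Rightarrow> bool" where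
  "C1_pos f \<longleftrightarrow> (\<forall>t>0. f differentiable (at t)) \<and> continuous_on {0<..} (deriv f)"

definition op_non_carleman_shift :: "(real \<Rightarrow> real) \<Rightarrow> bool" where
  "op_non_carleman_shift \<alpha> \<longleftrightarrow>
     bij_betw \<alpha> {0<..} {0<..} \<and>
     C1_pos \<alpha> \<and> C1_pos (inv_into {0<..} \<alpha>) \<and>
     strict_mono_on {0<..} \<alpha> \<and>
     (\<forall>t>0. \<alpha> t \<noteq> t)"

definition SOS :: "(real \<Rightarrow> real) set" where
  "SOS = {\<alpha>. op_non_carleman_shift \<alpha> \<and>
     (\<lambda>t. complex_of_real (ln (deriv \<alpha> t))) \<in> Cb \<and>
     (\<lambda>t. complex_of_real (deriv \<alpha> t)) \<in> SO}"

end

theory Submission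
  imports Defs
begin

text \<open>
  Put \<open>\<omega>(t) = ln (\<alpha>(t)/t)\<close>, so that \<open>\<alpha>(t) = t exp (\<omega>(t))\<close> and \<open>\<alpha>' = exp \<omega> (1 + t\<omega>')\<close>.
  Slow oscillation of bounded real functions is preserved by products and by composition
  with Lipschitz maps, so everything reduces to controlling \<open>\<alpha>(t)/t\<close>.
  If \<open>\<alpha> \<in> SOS\<close>, then \<open>\<alpha>'\<close> lies between two positive constants \<open>m \<le> M\<close>, hence so does
  \<open>\<alpha>(t)/t\<close>; moreover \<open>\<alpha>(t)/t\<close> differs from a mean value of \<open>\<alpha>'\<close> over \<open>[\<mu>t, t]\<close> by at
  most \<open>\<mu>M\<close>, so it is slowly oscillating together with \<open>\<alpha>'\<close>. Then so are \<open>\<omega>\<close> and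
  \<open>t\<omega>' = \<alpha>'/(\<alpha>(t)/t) - 1\<close>, and \<open>1 + t\<omega>' \<ge> m/M\<close>.
  Conversely, \<open>exp \<omega>\<close> and \<open>1 + t\<omega>'\<close> are slowly oscillating and bounded below by positive
  constants, hence so is their product \<open>\<alpha>'\<close>, and then also \<open>ln \<alpha>'\<close>.
\<close>

definition vanishing_oscillation :: "real filter \<Rightarrow> (real \<Rightarrow> real) \<Rightarrow> bool" where
  "vanishing_oscillation F f \<longleftrightarrow> (\<forall>lam e. 0 < lam \<and> lam < 1 \<and> 0 < e \<longrightarrow>
     (\<forall>\<^sub>F r in F. \<forall>s\<in>{lam*r..r}. \<forall>t\<in>{lam*r..r}. \<bar>f s - f t\<bar> \<le> e))"

definition slowly_oscillating :: "(real \<Rightarrow> real) \<Rightarrow> bool" where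
  "slowly_oscillating f \<longleftrightarrow> (\<lambda>t. complex_of_real (f t)) \<in> SO"

lemma osc_of_real:
  fixes f :: "real \<Rightarrow> real"
  assumes bound: "\<forall>t>0. \<bar>f t\<bar> \<le> B" and lam: "0 < lam" "lam < 1" and r: "0 < r"
  shows osc_of_real_nonneg: "0 \<le> osc (\<lambda>t. complex_of_real (f t)) lam r"
    and osc_of_real_le_iff: "osc (\<lambda>t. complex_of_real (f t)) lam r \<le> e \<longleftrightarrow>
      (\<forall>s\<in>{lam*r..r}. \<forall>t\<in>{lam*r..r}. \<bar>f s - f t\<bar> \<le> e)"
proof -
  define D where "D = {\<bar>f s - f t\<bar> | s t. s \<in> {lam*r..r} \<and> t \<in> {lam*r..r}}"
  have osc_eq: "osc (\<lambda>t. complex_of_real (f t)) lam r = Sup D"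
    unfolding osc_def D_def by (simp only: of_real_diff[symmetric] norm_of_real)
  have "r \<in> {lam*r..r}" using lam r by simp
  then have "0 \<in> D" unfolding D_def by force
  moreover have "bdd_above D" unfolding bdd_above_def D_def
  proof (intro exI[of _ "2*B"], clarify)
    fix s t assume "s \<in> {lam*r..r}" "t \<in> {lam*r..r}"
    moreover have "0 < lam * r" using lam r by simp
    ultimately have "\<bar>f s\<bar> \<le> B" "\<bar>f t\<bar> \<le> B" using bound by auto
    then show "\<bar>f s - f t\<bar> \<le> 2*B" by linarith
  qed
  ultimately have "0 \<le> Sup D" and "Sup D \<le> e \<longleftrightarrow> (\<forall>x\<in>D. x \<le> e)"
    using cSup_upper[of 0 D] cSup_le_iff[of D e] by blast+
  then show "0 \<le> osc (\<lambda>t. complex_of_real (f t)) lam r"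
    and "osc (\<lambda>t. complex_of_real (f t)) lam r \<le> e \<longleftrightarrow>
      (\<forall>s\<in>{lam*r..r}. \<forall>t\<in>{lam*r..r}. \<bar>f s - f t\<bar> \<le> e)"
    unfolding osc_eq D_def by blast+
qed

lemma osc_of_real_tendsto_0_iff:
  fixes f :: "real \<Rightarrow> real"
  assumes bound: "\<forall>t>0. \<bar>f t\<bar> \<le> B" and lam: "0 < lam" "lam < 1"
    and pos: "\<forall>\<^sub>F r in F. 0 < r"
  shows "((\<lambda>r. osc (\<lambda>t. complex_of_real (f t)) lam r) \<longlongrightarrow> 0) F \<longleftrightarrow>
    (\<forall>e>0. \<forall>\<^sub>F r in F. \<forall>s\<in>{lam*r..r}. \<forall>t\<in>{lam*r..r}. \<bar>f s - f t\<bar> \<le> e)"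
proof -
  have "((\<lambda>r. osc (\<lambda>t. complex_of_real (f t)) lam r) \<longlongrightarrow> 0) F \<longleftrightarrow>
      (\<forall>e>0. \<forall>\<^sub>F r in F. osc (\<lambda>t. complex_of_real (f t)) lam r \<le> e)"
  proof (unfold tendsto_iff dist_real_def diff_zero, intro iffI allI impI)
    fix e :: real assume "\<forall>e>0. \<forall>\<^sub>F r in F. \<bar>osc (\<lambda>t. complex_of_real (f t)) lam r\<bar> < e" "0 < e"
    then have "\<forall>\<^sub>F r in F. \<bar>osc (\<lambda>t. complex_of_real (f t)) lam r\<bar> < e" by blast
    then show "\<forall>\<^sub>F r in F. osc (\<lambda>t. complex_of_real (f t)) lam r \<le> e"
      by eventually_elim simp
  next
    fix e :: real assume "\<forall>e>0. \<forall>\<^sub>F r in F. osc (\<lambda>t. complex_of_real (f t)) lam r \<le> e" "0 < e"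
    then have "\<forall>\<^sub>F r in F. osc (\<lambda>t. complex_of_real (f t)) lam r \<le> e/2"
      using half_gt_zero by blast
    with pos show "\<forall>\<^sub>F r in F. \<bar>osc (\<lambda>t. complex_of_real (f t)) lam r\<bar> < e"
      by eventually_elim (use osc_of_real_nonneg[OF bound lam] \<open>0 < e\<close> in force)
  qed
  also have "\<dots> \<longleftrightarrow> (\<forall>e>0. \<forall>\<^sub>F r in F. \<forall>s\<in>{lam*r..r}. \<forall>t\<in>{lam*r..r}. \<bar>f s - f t\<bar> \<le> e)"
    using pos by (intro all_cong imp_cong refl eventually_cong)
      (auto elim!: eventually_mono simp: osc_of_real_le_iff[OF bound lam])
  finally show ?thesis .
qed

lemma slowly_oscillating_iff:
  "slowly_oscillating f \<longleftrightarrow> continuous_on {0<..} f \<and> (\<exists>B. \<forall>t>0. \<bar>f t\<bar> \<le> B) \<and>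
     vanishing_oscillation (at_right 0) f \<and> vanishing_oscillation at_top f"
proof (cases "\<exists>B. \<forall>t>0. \<bar>f t\<bar> \<le> B")
  case True
  then obtain B where B: "\<forall>t>0. \<bar>f t\<bar> \<le> B" by blast
  have pos: "\<forall>\<^sub>F r in at_right 0. (0::real) < r" "\<forall>\<^sub>F r in at_top. (0::real) < r"
    by (simp_all add: eventually_at_right_less eventually_gt_at_top)
  show ?thesis
    unfolding slowly_oscillating_def SO_def Cb_def bounded_iff vanishing_oscillation_def
    using True osc_of_real_tendsto_0_iff[OF B _ _ pos(1)] osc_of_real_tendsto_0_iff[OF B _ _ pos(2)]
    by auto
next
  case False
  then show ?thesis unfolding slowly_oscillating_def SO_def Cb_def bounded_iff by auto
qed

lemma vanishing_oscillation_increment_bound: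
  assumes f: "vanishing_oscillation F f" and g: "vanishing_oscillation F g"
    and pos: "\<forall>\<^sub>F r in F. 0 < r"
    and incr: "\<And>s t. 0 < s \<Longrightarrow> 0 < t \<Longrightarrow> \<bar>h s - h t\<bar> \<le> L * (\<bar>f s - f t\<bar> + \<bar>g s - g t\<bar>)"
  shows "vanishing_oscillation F h"
  unfolding vanishing_oscillation_def
proof (intro allI impI)
  fix lam e :: real assume lam_e: "0 < lam \<and> lam < 1 \<and> 0 < e"
  define d where "d = e / (2 * (\<bar>L\<bar> + 1))"
  have "0 < d" using lam_e unfolding d_def by simp
  then have "\<forall>\<^sub>F r in F. \<forall>s\<in>{lam*r..r}. \<forall>t\<in>{lam*r..r}. \<bar>f s - f t\<bar> \<le> d"
    and "\<forall>\<^sub>F r in F. \<forall>s\<in>{lam*r..r}. \<forall>t\<in>{lam*r..r}. \<bar>g s - g t\<bar> \<le> d"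
    using f g lam_e unfolding vanishing_oscillation_def by blast+
  with pos show "\<forall>\<^sub>F r in F. \<forall>s\<in>{lam*r..r}. \<forall>t\<in>{lam*r..r}. \<bar>h s - h t\<bar> \<le> e"
  proof eventually_elim
    case (elim r)
    show ?case
    proof (intro ballI)
      fix s t assume st: "s \<in> {lam*r..r}" "t \<in> {lam*r..r}"
      have "0 < lam * r" using lam_e elim(1) by simp
      then have "0 < s" "0 < t" using st by auto
      then have "\<bar>h s - h t\<bar> \<le> L * (\<bar>f s - f t\<bar> + \<bar>g s - g t\<bar>)" by (rule incr)
      also have "\<dots> \<le> (\<bar>L\<bar> + 1) * (2 * d)"
        using elim st by (intro mult_mono) fastforce+
      also have "\<dots> = e" unfolding d_def by (simp add: field_simps add_pos_nonneg)
      finally show "\<bar>h s - h t\<bar> \<le> e" .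
    qed
  qed
qed

lemma slowly_oscillating_increment_bound:
  assumes f: "slowly_oscillating f" and g: "slowly_oscillating g" and h: "continuous_on {0<..} h"
    and incr: "\<And>s t. 0 < s \<Longrightarrow> 0 < t \<Longrightarrow> \<bar>h s - h t\<bar> \<le> L * (\<bar>f s - f t\<bar> + \<bar>g s - g t\<bar>)"
  shows "slowly_oscillating h"
proof -
  obtain Bf Bg where Bf: "\<forall>t>0. \<bar>f t\<bar> \<le> Bf" and Bg: "\<forall>t>0. \<bar>g t\<bar> \<le> Bg"
    using f g unfolding slowly_oscillating_iff by blast
  have "\<bar>h t\<bar> \<le> \<bar>h 1\<bar> + \<bar>L\<bar> * (2 * Bf + 2 * Bg)" if "0 < t" for t
  proof -
    have "\<bar>h t - h 1\<bar> \<le> L * (\<bar>f t - f 1\<bar> + \<bar>g t - g 1\<bar>)" using incr that by simp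
    also have "\<dots> \<le> \<bar>L\<bar> * (2 * Bf + 2 * Bg)"
    proof (rule mult_mono)
      have "\<bar>f t\<bar> \<le> Bf" "\<bar>f 1\<bar> \<le> Bf" "\<bar>g t\<bar> \<le> Bg" "\<bar>g 1\<bar> \<le> Bg" using Bf Bg that by auto
      then show "\<bar>f t - f 1\<bar> + \<bar>g t - g 1\<bar> \<le> 2 * Bf + 2 * Bg" by arith
    qed auto
    finally show ?thesis by linarith
  qed
  moreover have "\<forall>\<^sub>F r in at_right 0. (0::real) < r" "\<forall>\<^sub>F r in at_top. (0::real) < r"
    by (simp_all add: eventually_at_right_less eventually_gt_at_top)
  ultimately show ?thesis
    using f g h incr unfolding slowly_oscillating_iff
    by (blast intro: vanishing_oscillation_increment_bound)
qed

lemma vanishing_oscillation_approx: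
  assumes f: "vanishing_oscillation F f" and pos: "\<forall>\<^sub>F r in F. 0 < r"
    and approx: "\<And>e. 0 < e \<Longrightarrow> \<exists>\<mu>. 0 < \<mu> \<and> \<mu> < 1 \<and> (\<forall>t>0. \<exists>\<xi>\<in>{\<mu>*t..t}. \<bar>h t - f \<xi>\<bar> \<le> e)"
  shows "vanishing_oscillation F h"
  unfolding vanishing_oscillation_def
proof (intro allI impI)
  fix lam e :: real assume lam_e: "0 < lam \<and> lam < 1 \<and> 0 < e"
  then obtain \<mu> where \<mu>: "0 < \<mu>" "\<mu> < 1" and near: "\<forall>t>0. \<exists>\<xi>\<in>{\<mu>*t..t}. \<bar>h t - f \<xi>\<bar> \<le> e/3"
    using approx[of "e/3"] by auto
  have "0 < lam * \<mu>" "lam * \<mu> < lam" using lam_e \<mu> by simp_all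
  then have "0 < lam * \<mu>" "lam * \<mu> < 1" "0 < e/3" using lam_e by linarith+
  then have "\<forall>\<^sub>F r in F. \<forall>s\<in>{lam*\<mu>*r..r}. \<forall>t\<in>{lam*\<mu>*r..r}. \<bar>f s - f t\<bar> \<le> e/3"
    using f unfolding vanishing_oscillation_def by blast
  with pos show "\<forall>\<^sub>F r in F. \<forall>s\<in>{lam*r..r}. \<forall>t\<in>{lam*r..r}. \<bar>h s - h t\<bar> \<le> e"
  proof eventually_elim
    case (elim r)
    have approx_in_segment: "\<exists>\<xi>\<in>{lam*\<mu>*r..r}. \<bar>h s - f \<xi>\<bar> \<le> e/3" if "s \<in> {lam*r..r}" for s
    proof -
      have "0 < lam * r" using lam_e elim(1) by simp
      then have "0 < s" using that by auto
      then obtain \<xi> where "\<xi> \<in> {\<mu> * s..s}" "\<bar>h s - f \<xi>\<bar> \<le> e/3" using near by blast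
      moreover have "lam * \<mu> * r \<le> \<mu> * s" using that \<mu> by (simp add: mult.commute mult.left_commute)
      ultimately show ?thesis using that by force
    qed
    show ?case
    proof (intro ballI)
      fix s t assume "s \<in> {lam*r..r}" "t \<in> {lam*r..r}"
      then obtain \<xi> \<eta> where "\<xi> \<in> {lam*\<mu>*r..r}" "\<bar>h s - f \<xi>\<bar> \<le> e/3"
        and "\<eta> \<in> {lam*\<mu>*r..r}" "\<bar>h t - f \<eta>\<bar> \<le> e/3"
        using approx_in_segment by meson
      moreover from this have "\<bar>f \<xi> - f \<eta>\<bar> \<le> e/3" using elim(2) by blast
      ultimately show "\<bar>h s - h t\<bar> \<le> e" by linarith
    qed
  qed
qed

lemma slowly_oscillating_approx:
  assumes f: "slowly_oscillating f" and h: "continuous_on {0<..} h"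
    and approx: "\<And>e. 0 < e \<Longrightarrow> \<exists>\<mu>. 0 < \<mu> \<and> \<mu> < 1 \<and> (\<forall>t>0. \<exists>\<xi>\<in>{\<mu>*t..t}. \<bar>h t - f \<xi>\<bar> \<le> e)"
  shows "slowly_oscillating h"
proof -
  obtain B where B: "\<forall>t>0. \<bar>f t\<bar> \<le> B" using f unfolding slowly_oscillating_iff by blast
  obtain \<mu> where \<mu>: "0 < \<mu>" "\<forall>t>0. \<exists>\<xi>\<in>{\<mu>*t..t}. \<bar>h t - f \<xi>\<bar> \<le> 1" using approx[of 1] by auto
  have "\<bar>h t\<bar> \<le> B + 1" if t: "0 < t" for t
  proof -
    obtain \<xi> where \<xi>: "\<xi> \<in> {\<mu>*t..t}" "\<bar>h t - f \<xi>\<bar> \<le> 1" using \<mu>(2) t by blast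
    have "0 < \<mu> * t" using \<mu>(1) t by simp
    then have "\<bar>f \<xi>\<bar> \<le> B" using B \<xi>(1) by auto
    with \<xi>(2) show ?thesis by linarith
  qed
  moreover have "vanishing_oscillation (at_right 0) f" "vanishing_oscillation at_top f"
    using f unfolding slowly_oscillating_iff by blast+
  then have "vanishing_oscillation (at_right 0) h" "vanishing_oscillation at_top h"
    using vanishing_oscillation_approx[OF _ eventually_at_right_less approx]
      vanishing_oscillation_approx[OF _ eventually_gt_at_top approx] by blast+
  ultimately show ?thesis using h unfolding slowly_oscillating_iff by blast
qed

lemma slowly_oscillating_cong:
  assumes f: "slowly_oscillating f" and eq: "\<And>t. 0 < t \<Longrightarrow> g t = f t"
  shows "slowly_oscillating g"
proof (rule slowly_oscillating_increment_bound[OF f f, where L = 1])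
  have "continuous_on {0<..} f" using f unfolding slowly_oscillating_iff by blast
  then show "continuous_on {0<..} g"
    by (rule continuous_on_cong[THEN iffD1, rotated 2]) (simp_all add: eq)
qed (simp add: eq)

lemma slowly_oscillating_mult:
  assumes f: "slowly_oscillating f" and g: "slowly_oscillating g"
  shows "slowly_oscillating (\<lambda>t. f t * g t)"
proof -
  obtain Bf Bg where Bf: "\<forall>t>0. \<bar>f t\<bar> \<le> Bf" and Bg: "\<forall>t>0. \<bar>g t\<bar> \<le> Bg"
    and "continuous_on {0<..} f" "continuous_on {0<..} g"
    using f g unfolding slowly_oscillating_iff by blast
  then have "continuous_on {0<..} (\<lambda>t. f t * g t)" by (intro continuous_on_mult)
  moreover have "\<bar>f s * g s - f t * g t\<bar> \<le> (\<bar>Bf\<bar> + \<bar>Bg\<bar>) * (\<bar>f s - f t\<bar> + \<bar>g s - g t\<bar>)"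
    if "0 < s" "0 < t" for s t
  proof -
    have bounds: "\<bar>f s\<bar> \<le> Bf" "\<bar>g t\<bar> \<le> Bg" using Bf Bg that by auto
    have "f s * g s - f t * g t = f s * (g s - g t) + g t * (f s - f t)" by (simp add: algebra_simps)
    then have "\<bar>f s * g s - f t * g t\<bar> \<le> \<bar>f s\<bar> * \<bar>g s - g t\<bar> + \<bar>g t\<bar> * \<bar>f s - f t\<bar>"
      by (metis abs_mult abs_triangle_ineq)
    also have "\<dots> \<le> (\<bar>Bf\<bar> + \<bar>Bg\<bar>) * \<bar>g s - g t\<bar> + (\<bar>Bf\<bar> + \<bar>Bg\<bar>) * \<bar>f s - f t\<bar>"
      using bounds by (intro add_mono mult_right_mono) auto
    finally show ?thesis by (simp add: distrib_left)
  qed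
  ultimately show ?thesis by (rule slowly_oscillating_increment_bound[OF f g])
qed

lemma slowly_oscillating_compose:
  assumes f: "slowly_oscillating f" and range: "\<And>t. 0 < t \<Longrightarrow> f t \<in> S"
    and \<phi>: "L-lipschitz_on S \<phi>"
  shows "slowly_oscillating (\<lambda>t. \<phi> (f t))"
proof (rule slowly_oscillating_increment_bound[OF f f])
  show "continuous_on {0<..} (\<lambda>t. \<phi> (f t))"
    using f range lipschitz_on_continuous_on[OF \<phi>] unfolding slowly_oscillating_iff
    by (auto intro: continuous_on_compose2)
  fix s t :: real assume "0 < s" "0 < t"
  then have "\<bar>\<phi> (f s) - \<phi> (f t)\<bar> \<le> L * \<bar>f s - f t\<bar>"
    using lipschitz_onD[OF \<phi>] range by (simp add: dist_real_def)
  also have "\<dots> \<le> L * (\<bar>f s - f t\<bar> + \<bar>f s - f t\<bar>)"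
    using lipschitz_on_nonneg[OF \<phi>] by (simp add: mult_left_mono)
  finally show "\<bar>\<phi> (f s) - \<phi> (f t)\<bar> \<le> L * (\<bar>f s - f t\<bar> + \<bar>f s - f t\<bar>)" .
qed

lemma lipschitz_on_real_deriv_bound:
  fixes f :: "real \<Rightarrow> real"
  assumes "convex S" "0 \<le> C"
    and deriv: "\<And>x. x \<in> S \<Longrightarrow> (f has_real_derivative f' x) (at x)"
    and bound: "\<And>x. x \<in> S \<Longrightarrow> \<bar>f' x\<bar> \<le> C"
  shows "C-lipschitz_on S f"
proof (rule bounded_derivative_imp_lipschitz[OF _ assms(1) _ assms(2)])
  show "(f has_derivative (*) (f' x)) (at x within S)" if "x \<in> S" for x
    using deriv[OF that] by (simp add: has_field_derivative_def has_derivative_at_withinI)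
  show "onorm ((*) (f' x)) \<le> C" if "x \<in> S" for x
    using bound[OF that] by (intro onorm_le) (simp add: abs_mult mult_right_mono)
qed

lemma lipschitz_on_ln: "0 < c \<Longrightarrow> (inverse c)-lipschitz_on {c..} ln"
  by (rule lipschitz_on_real_deriv_bound[where f' = inverse]) (auto simp: DERIV_ln le_imp_inverse_le)

lemma lipschitz_on_inverse: "0 < (c::real) \<Longrightarrow> (inverse (c\<^sup>2))-lipschitz_on {c..} inverse"
proof (rule lipschitz_on_real_deriv_bound[where f' = "\<lambda>x. - (inverse x ^ Suc (Suc 0))"])
  fix x assume "0 < c" "x \<in> {c..}"
  then have "0 < c" "c \<le> x" by auto
  then show "(inverse has_real_derivative - (inverse x ^ Suc (Suc 0))) (at x)"
    by (intro DERIV_inverse) simp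
  have "inverse x ^ 2 \<le> inverse c ^ 2"
    using \<open>0 < c\<close> \<open>c \<le> x\<close> by (intro power_mono le_imp_inverse_le) auto
  then show "\<bar>- (inverse x ^ Suc (Suc 0))\<bar> \<le> inverse (c\<^sup>2)"
    by (simp add: power_inverse numeral_2_eq_2)
qed auto

lemma lipschitz_on_exp: "(exp B)-lipschitz_on {..B} exp"
  by (rule lipschitz_on_real_deriv_bound[where f' = exp]) (auto intro!: DERIV_exp)

lemma lipschitz_on_translate: "1-lipschitz_on S (\<lambda>x::real. x - c)"
  by (rule lipschitz_onI) (simp_all add: dist_real_def)

lemma op_non_carleman_shiftD:
  assumes "op_non_carleman_shift \<alpha>"
  shows op_non_carleman_shift_has_deriv: "\<And>t. 0 < t \<Longrightarrow> (\<alpha> has_real_derivative deriv \<alpha> t) (at t)"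
    and op_non_carleman_shift_deriv_cont: "continuous_on {0<..} (deriv \<alpha>)"
    and op_non_carleman_shift_cont: "continuous_on {0<..} \<alpha>"
    and op_non_carleman_shift_pos: "\<And>t. 0 < t \<Longrightarrow> 0 < \<alpha> t"
    and op_non_carleman_shift_less: "\<And>s t. 0 < s \<Longrightarrow> s < t \<Longrightarrow> \<alpha> s < \<alpha> t"
    and op_non_carleman_shift_surj: "\<And>y. 0 < y \<Longrightarrow> \<exists>x>0. \<alpha> x = y"
proof -
  have bij: "bij_betw \<alpha> {0<..} {0<..}" and "C1_pos \<alpha>" and "strict_mono_on {0<..} \<alpha>"
    using assms unfolding op_non_carleman_shift_def by blast+
  then show D: "(\<alpha> has_real_derivative deriv \<alpha> t) (at t)" if "0 < t" for t
    using that unfolding C1_pos_def DERIV_deriv_iff_real_differentiable by blast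
  show "continuous_on {0<..} (deriv \<alpha>)" using \<open>C1_pos \<alpha>\<close> unfolding C1_pos_def by blast
  show "continuous_on {0<..} \<alpha>"
    by (rule continuous_at_imp_continuous_on) (auto intro: DERIV_isCont D)
  show "0 < \<alpha> t" if "0 < t" for t
    using bij that unfolding bij_betw_def by auto
  show "\<alpha> s < \<alpha> t" if "0 < s" "s < t" for s t
    using \<open>strict_mono_on {0<..} \<alpha>\<close> that unfolding strict_mono_on_def by auto
  show "\<exists>x>0. \<alpha> x = y" if "0 < y" for y
  proof -
    have "y \<in> \<alpha> ` {0<..}" using bij that unfolding bij_betw_def by simp
    then show ?thesis by auto
  qed
qed

lemma op_non_carleman_shift_deriv_pos:
  assumes \<alpha>: "op_non_carleman_shift \<alpha>" and t: "0 < t"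
  shows "0 < deriv \<alpha> t"
proof -
  let ?\<beta> = "inv_into {0<..} \<alpha>"
  have inj: "inj_on \<alpha> {0<..}" and "C1_pos ?\<beta>"
    using \<alpha> unfolding op_non_carleman_shift_def bij_betw_def by blast+
  then have "(?\<beta> has_real_derivative deriv ?\<beta> (\<alpha> t)) (at (\<alpha> t))"
    using op_non_carleman_shift_pos[OF \<alpha> t]
    unfolding C1_pos_def DERIV_deriv_iff_real_differentiable by blast
  from DERIV_chain[OF this op_non_carleman_shift_has_deriv[OF \<alpha> t]]
  have "((\<lambda>x. x) has_real_derivative deriv ?\<beta> (\<alpha> t) * deriv \<alpha> t) (at t)"
    by (rule has_field_derivative_transform_within_open[where S = "{0<..}"])
      (use t inv_into_f_f[OF inj] in auto)
  then have "deriv ?\<beta> (\<alpha> t) * deriv \<alpha> t = 1"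
    using DERIV_ident DERIV_unique by blast
  moreover have "\<not> deriv \<alpha> t < 0"
  proof
    assume "deriv \<alpha> t < 0"
    from DERIV_neg_dec_right[OF op_non_carleman_shift_has_deriv[OF \<alpha> t] this]
    obtain d where "0 < d" and "\<forall>h>0. h < d \<longrightarrow> \<alpha> (t + h) < \<alpha> t" by blast
    then have "\<alpha> (t + d/2) < \<alpha> t" by simp
    moreover have "\<alpha> t < \<alpha> (t + d/2)" using op_non_carleman_shift_less[OF \<alpha>] t \<open>0 < d\<close> by simp
    ultimately show False by simp
  qed
  ultimately show ?thesis by (cases "deriv \<alpha> t = 0") auto
qed

lemma op_non_carleman_shift_MVT:
  assumes \<alpha>: "op_non_carleman_shift \<alpha>" and "0 < a" "a < b"
  shows "\<exists>z>a. z < b \<and> \<alpha> b - \<alpha> a = (b - a) * deriv \<alpha> z"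
  using assms by (intro MVT2) (auto intro: op_non_carleman_shift_has_deriv)

lemma op_non_carleman_shift_le_linear:
  assumes \<alpha>: "op_non_carleman_shift \<alpha>" and M: "\<And>t. 0 < t \<Longrightarrow> deriv \<alpha> t \<le> M" and s: "0 < s"
  shows "\<alpha> s \<le> M * s"
proof (rule field_le_epsilon)
  fix d :: real assume "0 < d"
  then obtain x where x: "0 < x" "\<alpha> x = d" using op_non_carleman_shift_surj[OF \<alpha>] by blast
  have "0 < M" using M op_non_carleman_shift_deriv_pos[OF \<alpha>] less_le_trans s by blast
  show "\<alpha> s \<le> M * s + d"
  proof (cases "x < s")
    case True
    then obtain z where "x < z" "\<alpha> s - \<alpha> x = (s - x) * deriv \<alpha> z"
      using op_non_carleman_shift_MVT[OF \<alpha> x(1)] by blast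
    moreover have "(s - x) * deriv \<alpha> z \<le> (s - x) * M" using True M \<open>x < z\<close> x(1) by simp
    ultimately have "\<alpha> s - \<alpha> x \<le> (s - x) * M" by simp
    moreover have "(s - x) * M \<le> s * M" using x(1) \<open>0 < M\<close> by simp
    ultimately show ?thesis using x(2) by (simp add: algebra_simps)
  next
    case False
    then have "\<alpha> s \<le> \<alpha> x"
      using op_non_carleman_shift_less[OF \<alpha> s] by (cases "s = x") (auto intro: less_imp_le)
    moreover have "0 < M * s" using \<open>0 < M\<close> s by simp
    ultimately show ?thesis using x by linarith
  qed
qed

lemma op_non_carleman_shift_ge_linear:
  assumes \<alpha>: "op_non_carleman_shift \<alpha>" and m: "\<And>t. 0 < t \<Longrightarrow> m \<le> deriv \<alpha> t" and s: "0 < s"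
  shows "m * s \<le> \<alpha> s"
proof (cases "0 < m")
  case True
  show ?thesis
  proof (rule field_le_epsilon)
    fix d :: real assume "0 < d"
    define x where "x = min (s/2) (d/m)"
    have x: "0 < x" "x < s" "m * x \<le> d"
      using s True \<open>0 < d\<close> by (auto simp: x_def min_def field_simps)
    then obtain z where "x < z" "\<alpha> s - \<alpha> x = (s - x) * deriv \<alpha> z"
      using op_non_carleman_shift_MVT[OF \<alpha> x(1,2)] by blast
    moreover have "(s - x) * m \<le> (s - x) * deriv \<alpha> z" using x m \<open>x < z\<close> by simp
    moreover have "0 < \<alpha> x" using op_non_carleman_shift_pos[OF \<alpha> x(1)] .
    ultimately show "m * s \<le> \<alpha> s + d" using x(3) by (simp add: algebra_simps)
  qed
next
  case False
  then have "m * s \<le> 0" using s by (simp add: mult_nonpos_nonneg)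
  then show ?thesis using op_non_carleman_shift_pos[OF \<alpha> s] by linarith
qed

lemma slowly_oscillating_shift_quotient:
  assumes \<alpha>: "op_non_carleman_shift \<alpha>" and M: "\<And>t. 0 < t \<Longrightarrow> deriv \<alpha> t \<le> M"
    and SO: "slowly_oscillating (deriv \<alpha>)"
  shows "slowly_oscillating (\<lambda>t. \<alpha> t / t)"
proof (rule slowly_oscillating_approx[OF SO])
  show "continuous_on {0<..} (\<lambda>t. \<alpha> t / t)"
    using op_non_carleman_shift_cont[OF \<alpha>] by (intro continuous_intros) auto
  fix e :: real assume "0 < e"
  have "0 < M" using M[of 1] op_non_carleman_shift_deriv_pos[OF \<alpha>, of 1] by simp
  define \<mu> where "\<mu> = min (1/2) (e / M)"
  have \<mu>: "0 < \<mu>" "\<mu> < 1" "\<mu> * M \<le> e"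
    using \<open>0 < e\<close> \<open>0 < M\<close> by (auto simp: \<mu>_def min_def field_simps)
  have "\<exists>\<xi>\<in>{\<mu>*t..t}. \<bar>\<alpha> t / t - deriv \<alpha> \<xi>\<bar> \<le> e" if t: "0 < t" for t
  proof -
    have \<mu>t: "0 < \<mu> * t" "\<mu> * t < t" using \<mu> t by simp_all
    then obtain z where z: "\<mu> * t < z" "z < t" "\<alpha> t - \<alpha> (\<mu> * t) = (t - \<mu> * t) * deriv \<alpha> z"
      using op_non_carleman_shift_MVT[OF \<alpha>] by blast
    (* only the contribution of [0, \<mu> t] separates \<alpha> t / t from the mean value deriv \<alpha> z *)
    have "\<alpha> t / t - deriv \<alpha> z = \<alpha> (\<mu> * t) / t - \<mu> * deriv \<alpha> z"
      using z(3) t by (simp add: field_simps)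
    moreover have "0 \<le> \<alpha> (\<mu> * t) / t" "\<alpha> (\<mu> * t) / t \<le> \<mu> * M"
      using op_non_carleman_shift_pos[OF \<alpha> \<mu>t(1)] op_non_carleman_shift_le_linear[OF \<alpha> M \<mu>t(1)] t
      by (simp_all add: field_simps)
    moreover have "0 \<le> \<mu> * deriv \<alpha> z" "\<mu> * deriv \<alpha> z \<le> \<mu> * M"
      using \<mu> \<mu>t z M[of z] op_non_carleman_shift_deriv_pos[OF \<alpha>, of z] by simp_all
    ultimately have "\<bar>\<alpha> t / t - deriv \<alpha> z\<bar> \<le> \<mu> * M" by linarith
    moreover have "z \<in> {\<mu>*t..t}" using z by simp
    ultimately show ?thesis using \<mu>(3) by force
  qed
  then show "\<exists>\<mu>. 0 < \<mu> \<and> \<mu> < 1 \<and> (\<forall>t>0. \<exists>\<xi>\<in>{\<mu>*t..t}. \<bar>\<alpha> t / t - deriv \<alpha> \<xi>\<bar> \<le> e)"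
    using \<mu> by blast
qed

lemma log_quotient_deriv:
  assumes \<alpha>: "op_non_carleman_shift \<alpha>"
  shows "C1_pos (\<lambda>t. ln (\<alpha> t / t))"
    and "\<And>t. 0 < t \<Longrightarrow> t * deriv (\<lambda>t. ln (\<alpha> t / t)) t = deriv \<alpha> t * inverse (\<alpha> t / t) - 1"
proof -
  have D: "((\<lambda>t. ln (\<alpha> t / t)) has_real_derivative deriv \<alpha> t / \<alpha> t - 1 / t) (at t)" if "0 < t" for t
    using op_non_carleman_shift_pos[OF \<alpha> that] that
    by (auto intro!: derivative_eq_intros op_non_carleman_shift_has_deriv[OF \<alpha> that] simp: field_simps)
  then have d: "deriv (\<lambda>t. ln (\<alpha> t / t)) t = deriv \<alpha> t / \<alpha> t - 1 / t" if "0 < t" for t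
    using that by (intro DERIV_imp_deriv)
  have "continuous_on {0<..} (\<lambda>t. deriv \<alpha> t / \<alpha> t - 1 / t)"
    using op_non_carleman_shift_cont[OF \<alpha>] op_non_carleman_shift_deriv_cont[OF \<alpha>]
      op_non_carleman_shift_pos[OF \<alpha>, THEN less_imp_neq]
    by (intro continuous_intros) auto
  then show "C1_pos (\<lambda>t. ln (\<alpha> t / t))"
    unfolding C1_pos_def
  proof (intro conjI allI impI)
    show "(\<lambda>t. ln (\<alpha> t / t)) differentiable at t" if "0 < t" for t
      using D[OF that] real_differentiable_def by blast
  qed (rule continuous_on_cong[THEN iffD1, rotated 2], simp_all add: d)
  show "t * deriv (\<lambda>t. ln (\<alpha> t / t)) t = deriv \<alpha> t * inverse (\<alpha> t / t) - 1" if "0 < t" for t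
    using op_non_carleman_shift_pos[OF \<alpha> that] that by (simp add: d field_simps)
qed

lemma SOS_D:
  assumes "\<alpha> \<in> SOS"
  shows "slowly_oscillating (deriv \<alpha>)"
    and "\<exists>m M. 0 < m \<and> (\<forall>t>0. m \<le> deriv \<alpha> t \<and> deriv \<alpha> t \<le> M)"
proof -
  have \<alpha>: "op_non_carleman_shift \<alpha>" using assms unfolding SOS_def by blast
  show "slowly_oscillating (deriv \<alpha>)"
    using assms unfolding SOS_def slowly_oscillating_def by blast
  have "(\<lambda>t. complex_of_real (ln (deriv \<alpha> t))) \<in> Cb" using assms unfolding SOS_def by blast
  then obtain B where B: "\<And>t. 0 < t \<Longrightarrow> \<bar>ln (deriv \<alpha> t)\<bar> \<le> B"
    unfolding Cb_def bounded_iff by auto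
  have "exp (-B) \<le> deriv \<alpha> t \<and> deriv \<alpha> t \<le> exp B" if "0 < t" for t
  proof -
    have "-B \<le> ln (deriv \<alpha> t)" "ln (deriv \<alpha> t) \<le> B" using B[OF that] by linarith+
    then have "exp (-B) \<le> exp (ln (deriv \<alpha> t))" "exp (ln (deriv \<alpha> t)) \<le> exp B" by simp_all
    then show ?thesis using op_non_carleman_shift_deriv_pos[OF \<alpha> that] by simp
  qed
  then show "\<exists>m M. 0 < m \<and> (\<forall>t>0. m \<le> deriv \<alpha> t \<and> deriv \<alpha> t \<le> M)"
    by (intro exI[of _ "exp (-B)"] exI[of _ "exp B"]) simp
qed

lemma log_quotient_exponent:
  assumes \<alpha>: "op_non_carleman_shift \<alpha>" and SO: "slowly_oscillating (deriv \<alpha>)"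
    and m: "0 < m" and bounds: "\<And>t. 0 < t \<Longrightarrow> m \<le> deriv \<alpha> t \<and> deriv \<alpha> t \<le> M"
  defines "\<omega> \<equiv> \<lambda>t. ln (\<alpha> t / t)"
  shows "(\<forall>t>0. \<alpha> t = t * exp (\<omega> t)) \<and> slowly_oscillating \<omega> \<and> C1_pos \<omega> \<and>
    slowly_oscillating (\<lambda>t. t * deriv \<omega> t) \<and> (INF t\<in>{0<..}. 1 + t * deriv \<omega> t) > 0"
proof (intro conjI allI impI)
  let ?g = "\<lambda>t. \<alpha> t / t"
  have g_bounds: "m \<le> ?g t \<and> ?g t \<le> M" if "0 < t" for t
    using op_non_carleman_shift_ge_linear[OF \<alpha> _ that] op_non_carleman_shift_le_linear[OF \<alpha> _ that]
      bounds that by (simp add: field_simps)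
  have gSO: "slowly_oscillating ?g"
    using slowly_oscillating_shift_quotient[OF \<alpha> _ SO] bounds by blast
  show "\<alpha> t = t * exp (\<omega> t)" if "0 < t" for t
    using g_bounds[OF that] m that unfolding \<omega>_def by simp
  show "slowly_oscillating \<omega>"
    unfolding \<omega>_def using g_bounds by (intro slowly_oscillating_compose[OF gSO _ lipschitz_on_ln[OF m]]) auto
  show "C1_pos \<omega>" unfolding \<omega>_def by (rule log_quotient_deriv(1)[OF \<alpha>])
  have "slowly_oscillating (\<lambda>t. inverse (?g t))"
    using g_bounds by (intro slowly_oscillating_compose[OF gSO _ lipschitz_on_inverse[OF m]]) auto
  from slowly_oscillating_mult[OF SO this]
  have "slowly_oscillating (\<lambda>t. deriv \<alpha> t * inverse (?g t) - 1)"
    by (rule slowly_oscillating_compose[where \<phi> = "\<lambda>x. x - 1", OF _ _ lipschitz_on_translate[of UNIV]])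
      simp
  then show "slowly_oscillating (\<lambda>t. t * deriv \<omega> t)"
    by (rule slowly_oscillating_cong) (simp add: \<omega>_def log_quotient_deriv(2)[OF \<alpha>])
  have "m * inverse M \<le> 1 + t * deriv \<omega> t" if "0 < t" for t
  proof -
    have "m * inverse M \<le> deriv \<alpha> t * inverse (?g t)"
    proof (rule mult_mono)
      show "inverse M \<le> inverse (?g t)"
        using g_bounds[OF that] m by (intro le_imp_inverse_le) auto
    qed (use bounds[OF that] m in auto)
    then show ?thesis using that by (simp add: \<omega>_def log_quotient_deriv(2)[OF \<alpha>])
  qed
  then have "m * inverse M \<le> (INF t\<in>{0<..}. 1 + t * deriv \<omega> t)"
    by (intro cINF_greatest) auto
  moreover have "0 < m * inverse M" using m bounds[of 1] by simp
  ultimately show "(INF t\<in>{0<..}. 1 + t * deriv \<omega> t) > 0" by linarith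
qed

lemma deriv_exp_representation:
  assumes rep: "\<forall>t>0. \<alpha> t = t * exp (\<omega> t)" and \<omega>: "C1_pos \<omega>" and t: "0 < t"
  shows "deriv \<alpha> t = exp (\<omega> t) * (1 + t * deriv \<omega> t)"
proof (rule DERIV_imp_deriv)
  have "(\<omega> has_real_derivative deriv \<omega> t) (at t)"
    using \<omega> t unfolding C1_pos_def DERIV_deriv_iff_real_differentiable by blast
  then have "((\<lambda>x. x * exp (\<omega> x)) has_real_derivative exp (\<omega> t) * (1 + t * deriv \<omega> t)) (at t)"
    by (auto intro!: derivative_eq_intros simp: algebra_simps)
  then show "(\<alpha> has_real_derivative exp (\<omega> t) * (1 + t * deriv \<omega> t)) (at t)"
    by (rule has_field_derivative_transform_within_open[where S = "{0<..}"]) (use t rep in auto)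
qed

lemma exp_representation_imp_SOS:
  assumes \<alpha>: "op_non_carleman_shift \<alpha>" and rep: "\<forall>t>0. \<alpha> t = t * exp (\<omega> t)"
    and \<omega>SO: "slowly_oscillating \<omega>" and \<omega>: "C1_pos \<omega>"
    and t\<omega>'SO: "slowly_oscillating (\<lambda>t. t * deriv \<omega> t)"
    and inf: "(INF t\<in>{0<..}. 1 + t * deriv \<omega> t) > 0"
  shows "\<alpha> \<in> SOS"
proof -
  define c where "c = (INF t\<in>{0<..}. 1 + t * deriv \<omega> t)"
  obtain B0 B1 where B0: "\<forall>t>0. \<bar>\<omega> t\<bar> \<le> B0" and B1: "\<forall>t>0. \<bar>t * deriv \<omega> t\<bar> \<le> B1"
    using \<omega>SO t\<omega>'SO unfolding slowly_oscillating_iff by blast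
  have c_le: "c \<le> 1 + t * deriv \<omega> t" if "0 < t" for t
    unfolding c_def
  proof (rule cINF_lower)
    show "bdd_below ((\<lambda>t. 1 + t * deriv \<omega> t) ` {0<..})"
      using B1 by (intro bdd_belowI2[of _ "1 - B1"]) force
  qed (use that in simp)
  have "slowly_oscillating (\<lambda>t. exp (\<omega> t))"
    using B0 by (intro slowly_oscillating_compose[OF \<omega>SO _ lipschitz_on_exp[of B0]]) auto
  moreover have "slowly_oscillating (\<lambda>t. 1 + t * deriv \<omega> t)"
    using slowly_oscillating_compose[OF t\<omega>'SO _ lipschitz_on_translate[of UNIV "-1"]]
    by (simp add: add.commute)
  ultimately have dSO: "slowly_oscillating (deriv \<alpha>)"
    by (rule slowly_oscillating_cong[OF slowly_oscillating_mult])
      (simp add: deriv_exp_representation[OF rep \<omega>])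
  have lower: "exp (-B0) * c \<le> deriv \<alpha> t" if "0 < t" for t
    unfolding deriv_exp_representation[OF rep \<omega> that]
  proof (rule mult_mono)
    show "exp (-B0) \<le> exp (\<omega> t)" using B0 that by force
  qed (use c_le[OF that] inf c_def in auto)
  have "0 < exp (-B0) * c" using inf unfolding c_def by simp
  from slowly_oscillating_compose[OF dSO _ lipschitz_on_ln[OF this]]
  have "slowly_oscillating (\<lambda>t. ln (deriv \<alpha> t))" using lower by simp
  then show ?thesis
    using \<alpha> dSO unfolding SOS_def slowly_oscillating_def SO_def by blast
qed

theorem lemma2p2:
  fixes \<alpha> :: "real \<Rightarrow> real"
  assumes "op_non_carleman_shift \<alpha>"
  shows "\<alpha> \<in> SOS \<longleftrightarrow>
    (\<exists>\<omega> :: real \<Rightarrow> real.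
       (\<forall>t>0. \<alpha> t = t * exp (\<omega> t)) \<and>
       (\<lambda>t. complex_of_real (\<omega> t)) \<in> SO \<and> C1_pos \<omega> \<and>
       (\<lambda>t. complex_of_real (t * deriv \<omega> t)) \<in> SO \<and>
       (INF t\<in>{0<..}. 1 + t * deriv \<omega> t) > 0)"
  (is "_ \<longleftrightarrow> ?exponent")
proof
  assume "\<alpha> \<in> SOS"
  then obtain m M where "0 < m" and bounds: "\<forall>t>0. m \<le> deriv \<alpha> t \<and> deriv \<alpha> t \<le> M"
    using SOS_D(2) by blast
  from log_quotient_exponent[OF assms SOS_D(1)[OF \<open>\<alpha> \<in> SOS\<close>] \<open>0 < m\<close> bounds[rule_format]]
  show ?exponent
    unfolding slowly_oscillating_def by (rule exI[where x = "\<lambda>t. ln (\<alpha> t / t)"])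
next
  assume ?exponent
  then obtain \<omega> where "\<forall>t>0. \<alpha> t = t * exp (\<omega> t)" "slowly_oscillating \<omega>" "C1_pos \<omega>"
    "slowly_oscillating (\<lambda>t. t * deriv \<omega> t)" "(INF t\<in>{0<..}. 1 + t * deriv \<omega> t) > 0"
    unfolding slowly_oscillating_def by (elim exE conjE)
  then show "\<alpha> \<in> SOS" by (rule exp_representation_imp_SOS[OF assms])
qed

end
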